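(* Let $X$ be a vector field on $\mathbb{S}^1$ for which $\mathcal{E}_X^\pm$ is defined, let $A\in\mathrm{O}_0(1,2)$ and $v\in\mathbb{R}^{1,2}$. Then $\mathcal{E}^\pm_{A_*X+\Lambda(v)}=A_*\mathcal{E}^\pm_X+\mathcal{E}^\pm_{\Lambda(v)}$.
   Context: $\mathbb{R}^{1,2}$ is $\mathbb{R}^3$ with $\langle x,y\rangle=-x_0y_0+x_1y_1+x_2y_2$; $\mathrm{O}_0(1,2)$ is the identity component of its linear isometry group, acting on $\overline{\mathbb{D}^2}$ by $A\cdot\eta=\Pi(A(1,\eta))$, $\Pi(x_0,x_1,x_2)=(x_1/x_0,x_2/x_0)$; $A_*$ denotes pushforward of vector fields by $\eta\mapsto A\cdot\eta$ (on $\mathbb{S}^1$ or $\mathbb{D}^2$). Minkowski cross product: $\langle x\boxtimes y,u\rangle=\det(x,y,u)$. $\Lambda(v)$ is the Killing field $\eta\mapsto\mathrm{d}_{(1,\eta)}\Pi((1,\eta)\boxtimes v)$ (also on $\mathbb{S}^1$). A vector field $X$ on $\mathbb{S}^1$ is $X(z)=iz\phi_X(z)$. $\phi_X^-(\eta)=\sup\{a(\eta):a\text{ affine},a|_{\mathbb{S}^1}\le\phi_X\}$, $\phi_X^+(\eta)=\inf\{a(\eta):a\text{ affine},a|_{\mathbb{S}^1}\ge\phi_X\}$. $\Sigma^-(\eta)$ is the set of $\sigma$ with $\langle(1,\xi),\sigma\rangle\le\phi_X^-(\xi)$ for all $\xi\in\mathbb{D}^2$ and equality at $\eta$; $\Sigma^+(\eta)$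 likewise with $\ge\phi^+_X$. $\mathcal{E}_X^\pm$ is defined when each $\Sigma^\pm(\eta)$, $\eta\in\mathbb{D}^2$, is a single point or a compact segment (this holds e.g. when $\phi_X$ is lower semicontinuous for $\mathcal{E}_X^-$, upper semicontinuous for $\mathcal{E}_X^+$), and then $\mathcal{E}_X^\pm(\eta)=\mathrm{d}_{(1,\eta)}\Pi((1,\eta)\boxtimes\sigma^\pm(\eta))$ with $\sigma^\pm(\eta)$ that point or the midpoint of that segment. *)

theory Defs
  imports "HOL-Analysis.Analysis"
begin

text \<open>Minkowski space R^{1,2} is modelled as real^3 with coordinates x$1 = x_0, x$2 = x_1, x$3 = x_2.
  The (closed) disk and the circle are modelled inside the complex plane, eta = (Re eta, Im eta).\<close>

definition lor :: "real^3 \<Rightarrow> real^3 \<Rightarrow> real" where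
  "lor x y = - x$1 * y$1 + x$2 * y$2 + x$3 * y$3"

definition O12 :: "(real^3^3) set" where
  "O12 = {A. invertible A \<and> (\<forall>x y. lor (A *v x) (A *v y) = lor x y)}"

definition O0_12 :: "(real^3^3) set" where
  "O0_12 = connected_component_set O12 (mat 1)"

definition mcross :: "real^3 \<Rightarrow> real^3 \<Rightarrow> real^3" where
  "mcross x y = (THE w. \<forall>u. lor w u = det (vector [x, y, u] :: real^3^3))"

definition lift :: "complex \<Rightarrow> real^3" where
  "lift \<eta> = vector [1, Re \<eta>, Im \<eta>]"

definition Proj :: "real^3 \<Rightarrow> complex" where
  "Proj x = Complex (x$2 / x$1) (x$3 / x$1)"

definition act :: "real^3^3 \<Rightarrow> complex \<Rightarrow> complex" where
  "act A \<eta> = Proj (A *v lift \<eta>)"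

definition push :: "real^3^3 \<Rightarrow> (complex \<Rightarrow> complex) \<Rightarrow> complex \<Rightarrow> complex" where
  "push A Y \<xi> = (let \<eta> = act (matrix_inv A) \<xi> in frechet_derivative (act A) (at \<eta>) (Y \<eta>))"

definition Lam :: "real^3 \<Rightarrow> complex \<Rightarrow> complex" where
  "Lam v \<eta> = frechet_derivative Proj (at (lift \<eta>)) (mcross (lift \<eta>) v)"

text \<open>A vector field on S^1 is a map X with X(z) = i z phi_X(z), phi_X real.\<close>
definition vf_S1 :: "(complex \<Rightarrow> complex) \<Rightarrow> bool" where
  "vf_S1 X \<longleftrightarrow> (\<forall>z\<in>sphere 0 1. X z / (\<i> * z) \<in> \<real>)"

definition phi :: "(complex \<Rightarrow> complex) \<Rightarrow> complex \<Rightarrow> real" where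
  "phi X z = Re (X z / (\<i> * z))"

definition affine_fun :: "(complex \<Rightarrow> real) \<Rightarrow> bool" where
  "affine_fun a \<longleftrightarrow> (\<exists>c0 c1 c2. \<forall>\<xi>. a \<xi> = c0 + c1 * Re \<xi> + c2 * Im \<xi>)"

text \<open>phi^- (s = False) and phi^+ (s = True), extended-real valued.\<close>
definition phi_env :: "bool \<Rightarrow> (complex \<Rightarrow> complex) \<Rightarrow> complex \<Rightarrow> ereal" where
  "phi_env s X \<eta> = (if s
     then Inf {ereal (a \<eta>) | a. affine_fun a \<and> (\<forall>z\<in>sphere 0 1. a z \<ge> phi X z)}
     else Sup {ereal (a \<eta>) | a. affine_fun a \<and> (\<forall>z\<in>sphere 0 1. a z \<le> phi X z)})"

definition Sig :: "bool \<Rightarrow> (complex \<Rightarrow> complex) \<Rightarrow> complex \<Rightarrow> (real^3) set" where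
  "Sig s X \<eta> = {\<sigma>. (\<forall>\<xi>\<in>ball 0 1.
        (if s then ereal (lor (lift \<xi>) \<sigma>) \<ge> phi_env s X \<xi>
              else ereal (lor (lift \<xi>) \<sigma>) \<le> phi_env s X \<xi>))
      \<and> ereal (lor (lift \<eta>) \<sigma>) = phi_env s X \<eta>}"

definition E_defined :: "bool \<Rightarrow> (complex \<Rightarrow> complex) \<Rightarrow> bool" where
  "E_defined s X \<longleftrightarrow> (\<forall>\<eta>\<in>ball 0 1. \<exists>a b. Sig s X \<eta> = closed_segment a b)"

definition sig :: "bool \<Rightarrow> (complex \<Rightarrow> complex) \<Rightarrow> complex \<Rightarrow> real^3" where
  "sig s X \<eta> = (SOME m. \<exists>a b. Sig s X \<eta> = closed_segment a b \<and> m = midpoint a b)"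

definition E :: "bool \<Rightarrow> (complex \<Rightarrow> complex) \<Rightarrow> complex \<Rightarrow> complex" where
  "E s X \<eta> = frechet_derivative Proj (at (lift \<eta>)) (mcross (lift \<eta>) (sig s X \<eta>))"

end

theory Submission
  imports Defs
begin

text \<open>Elements of \<open>O\<^sub>0(1,2)\<close> preserve the time orientation and have determinant one.
  Hence they act on the closed disc, preserving the open disc and the circle, and they commute
  with the Minkowski cross product, which makes the Killing fields natural:
  \<open>A\<^sub>* \<Lambda>(\<sigma>) = \<Lambda>(A \<sigma>)\<close>. On the circle \<open>\<Lambda>(w)(z) = i z \<langle>(1,z), w\<rangle>\<close>, so for
  \<open>Y = A\<^sub>* X + \<Lambda>(v)\<close> the coefficient is \<open>\<phi>\<^sub>Y = h (\<phi>\<^sub>X \<circ> A\<inverse>) + \<langle>(1,\<cdot>), v\<rangle>\<close> with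
  \<open>h(\<xi>) = (A\<inverse>(1,\<xi>))\<^sub>0 > 0\<close>. Multiplication by \<open>h\<close> turns the affine function
  \<open>\<langle>(1, A\<inverse>\<cdot>\<xi>), w\<rangle>\<close> into \<open>\<langle>(1,\<xi>), A w\<rangle>\<close>, so the affine bounds of \<open>\<phi>\<^sub>Y\<close> are the
  images of those of \<open>\<phi>\<^sub>X\<close> under \<open>w \<mapsto> A w + v\<close>. Consequently the envelopes transform in
  the same way and \<open>\<Sigma>\<^sub>Y(\<eta>) = A \<Sigma>\<^sub>X(A\<inverse>\<cdot>\<eta>) + v\<close>. For \<open>X = 0\<close> an affine function of
  fixed sign on the disc that vanishes at an interior point is zero, so \<open>\<Sigma> = {0}\<close>, and the
  same transport gives \<open>\<Sigma>(\<eta>) = {v}\<close> for \<open>\<Lambda>(v)\<close>. Midpoints commute with affine maps and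
  \<open>E = \<Lambda>(\<sigma>)\<close>, which gives the formula.\<close>

section \<open>The Minkowski form and cross product\<close>

lemma lor_bilinear:
  "lor x (a + b) = lor x a + lor x b" "lor x (c *\<^sub>R a) = c * lor x a"
  "lor (c *\<^sub>R a) x = c * lor a x"
  "lor x (- a) = - lor x a" "lor x (a - b) = lor x a - lor x b"
  by (simp_all add: lor_def algebra_simps)

lemma lor_axis1: "lor u (axis 1 1) = - u$1" "lor (axis 1 1) u = - u$1"
  by (simp_all add: lor_def axis_def)

lemma lor_nondegenerate:
  assumes "\<And>u. lor w u = lor w' u"
  shows "w = w'"
proof -
  have "w$i = w'$i" for i
    using assms[of "axis i 1"] exhaust_3[of i] by (auto simp: lor_def axis_def)
  then show ?thesis by (simp add: vec_eq_iff)
qed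

lemma mcross_explicit:
  "mcross x y = vector [x$3*y$2 - x$2*y$3, x$3*y$1 - x$1*y$3, x$1*y$2 - x$2*y$1]"
  (is "_ = ?c")
proof -
  have c: "lor ?c u = det (vector [x, y, u] :: real^3^3)" for u
    by (simp add: lor_def det_3 algebra_simps)
  show ?thesis unfolding mcross_def
    by (rule the_equality) (auto simp: c intro: lor_nondegenerate)
qed

lemma lor_mcross: "lor (mcross x y) u = det (vector [x, y, u] :: real^3^3)"
  by (simp add: mcross_explicit lor_def det_3 algebra_simps)

lemma mcross_scaleR_left: "mcross (c *\<^sub>R x) y = c *\<^sub>R mcross x y"
  by (simp add: mcross_explicit vec_eq_iff forall_3 algebra_simps)

lemma mcross_add_right: "mcross x (y + z) = mcross x y + mcross x z"
  by (simp add: mcross_explicit vec_eq_iff forall_3 algebra_simps)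

lemma det_rows_matrix_vector_mult:
  fixes A :: "real^3^3"
  shows "det (vector [A *v x, A *v y, A *v u] :: real^3^3) = det A * det (vector [x, y, u] :: real^3^3)"
proof -
  have "(vector [A *v x, A *v y, A *v u] :: real^3^3) = vector [x, y, u] ** transpose A"
    by (simp add: vec_eq_iff forall_3 matrix_matrix_mult_def matrix_vector_mult_def transpose_def
        sum_3 mult.commute)
  then show ?thesis by (simp add: det_mul)
qed

section \<open>The group \<open>O(1,2)\<close> and its identity component\<close>

lemma matrix_inv_mult:
  fixes A :: "'a::semiring_1^'n^'m"
  assumes "invertible A"
  shows "A ** matrix_inv A = mat 1" "matrix_inv A ** A = mat 1"
proof -
  have "A ** matrix_inv A = mat 1 \<and> matrix_inv A ** A = mat 1"
    using assms unfolding invertible_def matrix_inv_def by (rule someI_ex)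
  then show "A ** matrix_inv A = mat 1" "matrix_inv A ** A = mat 1" by auto
qed

lemma matrix_inv_mult_vector:
  fixes A :: "'a::comm_semiring_1^'n^'n"
  assumes "invertible A"
  shows "A *v (matrix_inv A *v x) = x" "matrix_inv A *v (A *v x) = x"
  using matrix_inv_mult[OF assms] by (simp_all add: matrix_vector_mul_assoc)

lemma O12_lor: "A \<in> O12 \<Longrightarrow> lor (A *v x) (A *v y) = lor x y"
  by (simp add: O12_def)

lemma O12_invertible: "A \<in> O12 \<Longrightarrow> invertible A"
  by (simp add: O12_def)

lemma O12_matrix_inv:
  assumes "A \<in> O12"
  shows "matrix_inv A \<in> O12"
proof -
  note inv = matrix_inv_mult_vector[OF O12_invertible[OF assms]]
  have "invertible (matrix_inv A)"
    using matrix_inv_mult[OF O12_invertible[OF assms]] invertible_def by blast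
  moreover have "lor (matrix_inv A *v x) (matrix_inv A *v y) = lor x y" for x y
    using O12_lor[OF assms, of "matrix_inv A *v x" "matrix_inv A *v y"] by (simp add: inv)
  ultimately show ?thesis by (simp add: O12_def)
qed

lemma O12_adjoint: "A \<in> O12 \<Longrightarrow> lor x (A *v w) = lor (matrix_inv A *v x) w"
  using O12_lor[OF O12_matrix_inv, of A x "A *v w"]
  by (simp add: matrix_inv_mult_vector O12_invertible)

lemma O12_entry11_sq:
  assumes "A \<in> O12"
  shows "1 \<le> (A$1$1)^2"
proof -
  have "lor (A *v axis 1 1) (A *v axis 1 1) = -1"
    using O12_lor[OF assms] by (simp add: lor_def axis_def)
  then have "(A$2$1)^2 + (A$3$1)^2 - (A$1$1)^2 = -1"
    by (simp add: lor_def matrix_vector_mult_basis column_def power2_eq_square)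
  then show ?thesis using zero_le_power2[of "A$2$1"] zero_le_power2[of "A$3$1"] by linarith
qed

definition minkowski_matrix :: "real^3^3" where
  "minkowski_matrix = (\<chi> i j. if i = j then (if i = 1 then -1 else 1) else 0)"

lemma O12_gram:
  assumes "A \<in> O12"
  shows "transpose A ** minkowski_matrix ** A = minkowski_matrix"
proof -
  have "(transpose A ** minkowski_matrix ** A)$i$j = lor (A *v axis i 1) (A *v axis j 1)" for i j
    by (simp add: matrix_matrix_mult_def transpose_def minkowski_matrix_def sum_3 lor_def
        matrix_vector_mult_basis column_def algebra_simps)
  moreover have "lor (axis i 1) (axis j 1) = minkowski_matrix$i$j" for i j
    using exhaust_3[of i] exhaust_3[of j] by (auto simp: lor_def axis_def minkowski_matrix_def)
  ultimately show ?thesis using O12_lor[OF assms] by (simp add: vec_eq_iff)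
qed

lemma O12_det_sq:
  assumes "A \<in> O12"
  shows "(det A)^2 = 1"
proof -
  have "det A * det minkowski_matrix * det A = det minkowski_matrix"
    using arg_cong[OF O12_gram[OF assms], of det] by (simp add: det_mul det_transpose)
  moreover have "det minkowski_matrix = -1"
    by (simp add: det_3 minkowski_matrix_def)
  ultimately show ?thesis by (simp add: power2_eq_square)
qed

lemma O12_mcross:
  assumes "A \<in> O12" "det A = 1"
  shows "A *v mcross x y = mcross (A *v x) (A *v y)"
proof (rule lor_nondegenerate)
  fix u
  define u' where "u' = matrix_inv A *v u"
  have u: "u = A *v u'"
    by (simp add: u'_def matrix_inv_mult_vector O12_invertible[OF assms(1)])
  show "lor (A *v mcross x y) u = lor (mcross (A *v x) (A *v y)) u"
    unfolding u by (simp add: O12_lor[OF assms(1)] lor_mcross det_rows_matrix_vector_mult assms(2))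
qed

lemma mat1_O12: "mat 1 \<in> O12"
  unfolding O12_def invertible_def by (auto simp: matrix_mul_lid)

lemma connected_nonvanishing_pos:
  fixes f :: "'a::topological_space \<Rightarrow> real"
  assumes "connected S" "continuous_on S f" "\<And>x. x \<in> S \<Longrightarrow> f x \<noteq> 0"
    and "a \<in> S" "0 < f a" "b \<in> S"
  shows "0 < f b"
proof (rule ccontr)
  assume "\<not> 0 < f b"
  then have "f b < 0" using assms(3,6) by force
  moreover have "is_interval (f ` S)"
    using connected_continuous_image[OF assms(2,1)] is_interval_connected_1 by blast
  ultimately have "0 \<in> f ` S"
    using assms(4,5,6) unfolding is_interval_1 by (meson imageI less_eq_real_def)
  then show False using assms(3) by auto
qed

lemma O0_12D:
  assumes "A \<in> O0_12"
  shows "A \<in> O12" "0 < A$1$1" "det A = 1"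
proof -
  let ?C = "connected_component_set O12 (mat 1)"
  have C: "connected ?C" "?C \<subseteq> O12" "mat 1 \<in> ?C" "A \<in> ?C"
    using assms mat1_O12 connected_component_subset
    by (auto simp: O0_12_def connected_component_refl)
  then show "A \<in> O12" by blast
  show "0 < A$1$1"
  proof (rule connected_nonvanishing_pos[OF C(1) _ _ C(3) _ C(4)])
    show "continuous_on ?C (\<lambda>M::real^3^3. M$1$1)" by (intro continuous_intros)
    show "M$1$1 \<noteq> 0" if "M \<in> ?C" for M using O12_entry11_sq[of M] that C(2) by force
  qed (simp add: mat_def)
  have "0 < det A"
  proof (rule connected_nonvanishing_pos[OF C(1) _ _ C(3) _ C(4)])
    show "continuous_on ?C (\<lambda>M::real^3^3. det M)" unfolding det_3 by (intro continuous_intros)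
    show "det M \<noteq> 0" if "M \<in> ?C" for M using O12_det_sq[of M] that C(2) by force
  qed (simp add: det_I)
  then show "det A = 1"
    using O12_det_sq[OF \<open>A \<in> O12\<close>] power2_eq_1_iff[of "det A"] by auto
qed

lemma future_if_lor_neg:
  assumes "0 < p$1" "lor p p < 0" "lor q q \<le> 0" "lor p q < 0"
  shows "0 < q$1"
proof (rule ccontr)
  assume "\<not> 0 < q$1"
  then have "p$1 * q$1 \<le> 0" using assms(1) by (simp add: mult_nonneg_nonpos)
  then have "\<bar>p$1*q$1\<bar> < \<bar>p$2*q$2 + p$3*q$3\<bar>"
    using assms(4) by (simp add: lor_def)
  then have "(p$1*q$1)^2 < (p$2*q$2 + p$3*q$3)^2"
    using power_strict_mono[of _ _ 2] by (metis abs_ge_zero power2_abs zero_less_numeral)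
  also have "\<dots> \<le> (p$2^2 + p$3^2) * (q$2^2 + q$3^2)"
    using zero_le_power2[of "p$2*q$3 - p$3*q$2"] by (simp add: power2_eq_square algebra_simps)
  also have "\<dots> \<le> p$1^2 * q$1^2"
    using assms(2,3) by (intro mult_mono) (simp_all add: lor_def power2_eq_square)
  finally show False by (simp add: power_mult_distrib)
qed

definition orthochronous :: "real^3^3 \<Rightarrow> bool" where
  "orthochronous A \<longleftrightarrow> A \<in> O12 \<and> 0 < A$1$1"

lemma orthochronous_future:
  assumes "orthochronous A" "0 < y$1" "lor y y \<le> 0"
  shows "0 < (A *v y)$1"
proof (rule future_if_lor_neg[of "A *v axis 1 1"])
  have O: "A \<in> O12" using assms(1) by (simp add: orthochronous_def)
  show "0 < (A *v axis 1 1)$1"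
    using assms(1) by (simp add: orthochronous_def matrix_vector_mult_basis column_def)
  show "lor (A *v axis 1 1) (A *v axis 1 1) < 0" "lor (A *v axis 1 1) (A *v y) < 0"
    using assms(2) by (simp_all add: O12_lor[OF O] lor_axis1)
  show "lor (A *v y) (A *v y) \<le> 0" using assms(3) by (simp add: O12_lor[OF O])
qed

lemma orthochronous_matrix_inv:
  assumes "orthochronous A"
  shows "orthochronous (matrix_inv A)"
proof -
  have O: "A \<in> O12" using assms by (simp add: orthochronous_def)
  have "lor (axis 1 1) (A *v axis 1 1) = lor (matrix_inv A *v axis 1 1) (axis 1 1)"
    by (rule O12_adjoint[OF O])
  then have "(matrix_inv A)$1$1 = A$1$1"
    by (simp add: lor_axis1 matrix_vector_mult_basis column_def)
  then show ?thesis using assms O12_matrix_inv[OF O] by (simp add: orthochronous_def)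
qed

lemma orthochronous_mat1: "orthochronous (mat 1)"
  using mat1_O12 by (simp add: orthochronous_def mat_def)

lemma orthochronous_matrix_inv_vector:
  "orthochronous A \<Longrightarrow> A *v (matrix_inv A *v x) = x"
  "orthochronous A \<Longrightarrow> matrix_inv A *v (A *v x) = x"
  by (simp_all add: orthochronous_def O12_invertible matrix_inv_mult_vector)

section \<open>The projective action on the disc\<close>

lemma lift_nth [simp]: "lift \<eta> $ 1 = 1" "lift \<eta> $ 2 = Re \<eta>" "lift \<eta> $ 3 = Im \<eta>"
  by (simp_all add: lift_def)

lemma lor_lift_self: "lor (lift z) (lift z) = (cmod z)^2 - 1"
  using cmod_power2[of z] by (simp add: lor_def power2_eq_square)

lemma Proj_lift [simp]: "Proj (lift \<eta>) = \<eta>"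
  by (simp add: Proj_def complex_eq_iff)

lemma lift_Proj: "x$1 \<noteq> 0 \<Longrightarrow> lift (Proj x) = (1 / x$1) *\<^sub>R x"
  by (simp add: vec_eq_iff forall_3 Proj_def lift_def)

lemma Proj_scaleR: "t \<noteq> 0 \<Longrightarrow> Proj (t *\<^sub>R x) = Proj x"
  by (simp add: Proj_def)

lemma act_first_coord_pos:
  assumes "orthochronous A" "cmod z \<le> 1"
  shows "0 < (A *v lift z)$1"
proof (rule orthochronous_future[OF assms(1)])
  show "lor (lift z) (lift z) \<le> 0"
    using assms(2) by (simp add: lor_lift_self power_le_one)
qed simp

lemma lift_act:
  assumes "orthochronous A" "cmod \<xi> \<le> 1"
  shows "lift (act A \<xi>) = (1 / (A *v lift \<xi>)$1) *\<^sub>R (A *v lift \<xi>)"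
  unfolding act_def using lift_Proj act_first_coord_pos[OF assms] by simp

lemma act_norm_sq:
  assumes "orthochronous A" "cmod z \<le> 1"
  shows "(cmod (act A z))^2 - 1 = ((cmod z)^2 - 1) / ((A *v lift z)$1)^2"
proof -
  have t: "0 < (A *v lift z)$1" by (rule act_first_coord_pos[OF assms])
  have "(cmod (act A z))^2 - 1 = lor (lift (act A z)) (lift (act A z))"
    by (simp add: lor_lift_self)
  also have "\<dots> = lor (A *v lift z) (A *v lift z) / ((A *v lift z)$1)^2"
    using t by (simp add: lift_act[OF assms] lor_bilinear lor_def field_simps power2_eq_square)
  finally show ?thesis
    using assms(1) by (simp add: orthochronous_def O12_lor lor_lift_self)
qed

lemma act_ball:
  assumes "orthochronous A" "z \<in> ball 0 1"
  shows "act A z \<in> ball 0 1"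
proof -
  have z: "cmod z \<le> 1" "(cmod z)^2 - 1 < 0"
    using assms(2) by (simp_all add: abs_square_less_1)
  have "0 < ((A *v lift z)$1)^2" using act_first_coord_pos[OF assms(1) z(1)] by simp
  then have "(cmod (act A z))^2 - 1 < 0"
    unfolding act_norm_sq[OF assms(1) z(1)] using z(2) by (rule divide_neg_pos[rotated])
  then show ?thesis by (simp add: abs_square_less_1)
qed

lemma act_sphere:
  assumes "orthochronous A" "z \<in> sphere 0 1"
  shows "act A z \<in> sphere 0 1"
proof -
  have z: "cmod z \<le> 1" "(cmod z)^2 - 1 = 0" using assms(2) by simp_all
  have "(cmod (act A z))^2 - 1 = 0" unfolding act_norm_sq[OF assms(1) z(1)] z(2) by simp
  then show ?thesis using abs_square_eq_1[of "cmod (act A z)"] by simp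
qed

lemma act_cball:
  assumes "orthochronous A" "cmod z \<le> 1"
  shows "cmod (act A z) \<le> 1"
proof -
  have z: "(cmod z)^2 - 1 \<le> 0" using assms(2) by (simp add: power_le_one)
  have "0 < ((A *v lift z)$1)^2" using act_first_coord_pos[OF assms] by simp
  then have "(cmod (act A z))^2 - 1 \<le> 0"
    unfolding act_norm_sq[OF assms] using z by (rule divide_nonpos_pos[rotated])
  then show ?thesis by (simp add: abs_square_le_1)
qed

lemma act_matrix_inv_act:
  assumes "orthochronous A" "cmod \<xi> \<le> 1"
  shows "act (matrix_inv A) (act A \<xi>) = \<xi>" "act A (act (matrix_inv A) \<xi>) = \<xi>"
proof -
  have inverse: "act M (act N \<xi>) = \<xi>" if "orthochronous N" "\<And>x. M *v (N *v x) = x" for M N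
  proof -
    have "0 < (N *v lift \<xi>)$1" by (rule act_first_coord_pos[OF that(1) assms(2)])
    then show ?thesis
      unfolding act_def[of M] lift_act[OF that(1) assms(2)]
      by (simp add: matrix_vector_mult_scaleR that(2) Proj_scaleR)
  qed
  show "act (matrix_inv A) (act A \<xi>) = \<xi>"
    by (rule inverse[OF assms(1) orthochronous_matrix_inv_vector(2)[OF assms(1)]])
  show "act A (act (matrix_inv A) \<xi>) = \<xi>"
    by (rule inverse[OF orthochronous_matrix_inv[OF assms(1)]
          orthochronous_matrix_inv_vector(1)[OF assms(1)]])
qed

lemma act_image_eq:
  assumes "orthochronous A" "\<And>B z. orthochronous B \<Longrightarrow> z \<in> S \<Longrightarrow> act B z \<in> S"
    and "S \<subseteq> cball 0 1"
  shows "act A ` S = S"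
proof
  show "act A ` S \<subseteq> S" using assms(2)[OF assms(1)] by blast
  show "S \<subseteq> act A ` S"
  proof
    fix \<xi> assume "\<xi> \<in> S"
    then have "act A (act (matrix_inv A) \<xi>) = \<xi>" "act (matrix_inv A) \<xi> \<in> S"
      using act_matrix_inv_act(2)[OF assms(1)] assms(2)[OF orthochronous_matrix_inv[OF assms(1)]]
        assms(3) by auto
    then show "\<xi> \<in> act A ` S" by (metis imageI)
  qed
qed

lemma act_image_ball: "orthochronous A \<Longrightarrow> act A ` ball 0 1 = ball 0 1"
  by (rule act_image_eq[OF _ act_ball]) auto

lemma act_image_sphere: "orthochronous A \<Longrightarrow> act A ` sphere 0 1 = sphere 0 1"
  by (rule act_image_eq[OF _ act_sphere]) auto

definition push_factor :: "real^3^3 \<Rightarrow> complex \<Rightarrow> real" where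
  "push_factor A \<xi> = (matrix_inv A *v lift \<xi>)$1"

lemma push_factor_pos: "orthochronous A \<Longrightarrow> cmod \<xi> \<le> 1 \<Longrightarrow> 0 < push_factor A \<xi>"
  unfolding push_factor_def by (rule act_first_coord_pos[OF orthochronous_matrix_inv])

lemma push_factor_eq_lor:
  "A \<in> O12 \<Longrightarrow> push_factor A \<xi> = lor (lift \<xi>) (A *v (- axis 1 1))"
  by (simp add: push_factor_def O12_adjoint lor_bilinear lor_axis1)

lemma push_factor_lor:
  assumes "orthochronous A" "cmod \<xi> \<le> 1"
  shows "push_factor A \<xi> * lor (lift (act (matrix_inv A) \<xi>)) w = lor (lift \<xi>) (A *v w)"
proof -
  have "lift (act (matrix_inv A) \<xi>) = (1 / push_factor A \<xi>) *\<^sub>R (matrix_inv A *v lift \<xi>)"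
    unfolding push_factor_def by (rule lift_act[OF orthochronous_matrix_inv[OF assms(1)] assms(2)])
  then have "push_factor A \<xi> * lor (lift (act (matrix_inv A) \<xi>)) w = lor (matrix_inv A *v lift \<xi>) w"
    using push_factor_pos[OF assms] by (simp add: lor_bilinear)
  also have "\<dots> = lor (lift \<xi>) (A *v w)"
    using assms(1) by (simp add: orthochronous_def O12_adjoint)
  finally show ?thesis .
qed

section \<open>Killing fields and pushforwards\<close>

definition dProj :: "real^3 \<Rightarrow> real^3 \<Rightarrow> complex" where
  "dProj y u = Complex ((u$2 * y$1 - y$2 * u$1) / (y$1)^2) ((u$3 * y$1 - y$3 * u$1) / (y$1)^2)"

definition dlift :: "complex \<Rightarrow> real^3" where
  "dlift h = vector [0, Re h, Im h]"

lemma Proj_has_derivative: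
  assumes "y$1 \<noteq> 0"
  shows "(Proj has_derivative dProj y) (at y)"
proof -
  have coordinate: "((\<lambda>x::real^3. x$i) has_derivative (\<lambda>h. h$i)) (at y)" for i
    by (rule bounded_linear_imp_has_derivative[OF bounded_linear_vec_nth])
  have quotient: "((\<lambda>x::real^3. x$i / x$1) has_derivative
      (\<lambda>h. - (y$i) * (inverse (y$1) * h$1 * inverse (y$1)) + h$i / y$1)) (at y)" for i
    by (rule has_derivative_divide[OF coordinate coordinate assms])
  have P: "Proj = (\<lambda>x. (x$2 / x$1) *\<^sub>R 1 + (x$3 / x$1) *\<^sub>R \<i>)"
    by (simp add: fun_eq_iff Proj_def complex_eq_iff)
  have D: "dProj y = (\<lambda>h. (- (y$2) * (inverse (y$1) * h$1 * inverse (y$1)) + h$2 / y$1) *\<^sub>R 1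
      + (- (y$3) * (inverse (y$1) * h$1 * inverse (y$1)) + h$3 / y$1) *\<^sub>R \<i>)"
    using assms by (auto simp: fun_eq_iff dProj_def complex_eq_iff field_simps power2_eq_square)
  show ?thesis
    unfolding P D by (intro has_derivative_add has_derivative_scaleR_left quotient)
qed

lemma frechet_derivative_Proj: "y$1 \<noteq> 0 \<Longrightarrow> frechet_derivative Proj (at y) = dProj y"
  using frechet_derivative_at[OF Proj_has_derivative] by simp

lemma lift_has_derivative: "(lift has_derivative dlift) (at \<eta>)"
proof -
  have "linear dlift" by (rule linearI) (simp_all add: dlift_def vec_eq_iff forall_3)
  then have "((\<lambda>\<eta>. dlift \<eta> + vector [1, 0, 0]) has_derivative dlift) (at \<eta>)"
    by (intro has_derivative_add_const bounded_linear_imp_has_derivative)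
      (simp add: linear_conv_bounded_linear)
  moreover have "(\<lambda>\<eta>. dlift \<eta> + vector [1, 0, 0]) = lift"
    by (simp add: fun_eq_iff lift_def dlift_def vec_eq_iff forall_3)
  ultimately show ?thesis by simp
qed

lemma frechet_derivative_act:
  assumes "(A *v lift \<eta>)$1 \<noteq> 0"
  shows "frechet_derivative (act A) (at \<eta>) = (\<lambda>h. dProj (A *v lift \<eta>) (A *v dlift h))"
proof -
  have "((\<lambda>\<eta>. A *v lift \<eta>) has_derivative (\<lambda>h. A *v dlift h)) (at \<eta>)"
    using diff_chain_at[OF lift_has_derivative bounded_linear_imp_has_derivative
        [OF matrix_vector_mul_bounded_linear]] by (simp add: o_def)
  from diff_chain_at[OF this Proj_has_derivative[OF assms]]
  have "(act A has_derivative (\<lambda>h. dProj (A *v lift \<eta>) (A *v dlift h))) (at \<eta>)"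
    by (simp add: o_def act_def[abs_def])
  then show ?thesis by (rule frechet_derivative_at[symmetric])
qed

lemma linear_dProj: "linear (dProj y)"
  by (rule linearI) (simp_all add: dProj_def complex_eq_iff add_divide_distrib[symmetric]
      diff_divide_distrib[symmetric] algebra_simps)

lemma dProj_self: "y$1 \<noteq> 0 \<Longrightarrow> dProj y y = 0"
  by (simp add: dProj_def complex_eq_iff field_simps)

lemma dProj_scaleR: "t \<noteq> 0 \<Longrightarrow> y$1 \<noteq> 0 \<Longrightarrow> dProj (t *\<^sub>R y) (t *\<^sub>R u) = dProj y u"
  by (simp add: dProj_def complex_eq_iff field_simps power2_eq_square)

lemma dlift_dProj: "y$1 = 1 \<Longrightarrow> dlift (dProj y u) = u - u$1 *\<^sub>R y"
  by (simp add: dlift_def dProj_def vec_eq_iff forall_3)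

lemma Lam_eq_dProj: "Lam v \<eta> = dProj (lift \<eta>) (mcross (lift \<eta>) v)"
  by (simp add: Lam_def frechet_derivative_Proj)

lemma E_eq_Lam: "E s X \<eta> = Lam (sig s X \<eta>) \<eta>"
  by (simp add: E_def Lam_def)

lemma Lam_add: "Lam (v + w) \<eta> = Lam v \<eta> + Lam w \<eta>"
  by (simp add: Lam_eq_dProj mcross_add_right linear_add[OF linear_dProj])

lemma Lam_on_circle:
  assumes "z \<in> sphere 0 1"
  shows "Lam w z = \<i> * z * lor (lift z) w"
proof -
  have "Re z * Re z + Im z * Im z = 1" using assms cmod_power2[of z] by (simp add: power2_eq_square)
  then show ?thesis unfolding Lam_eq_dProj
    by (simp add: dProj_def mcross_explicit lor_def complex_eq_iff) algebra+
qed

lemma push_eq_dProj: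
  assumes "orthochronous A" "cmod \<xi> \<le> 1"
  shows "push A Y \<xi> = dProj (A *v lift (act (matrix_inv A) \<xi>)) (A *v dlift (Y (act (matrix_inv A) \<xi>)))"
proof -
  have "cmod (act (matrix_inv A) \<xi>) \<le> 1"
    by (rule act_cball[OF orthochronous_matrix_inv[OF assms(1)] assms(2)])
  then have "(A *v lift (act (matrix_inv A) \<xi>))$1 \<noteq> 0"
    using act_first_coord_pos[OF assms(1)] by force
  then show ?thesis by (simp add: push_def Let_def frechet_derivative_act)
qed

lemma push_scaleR:
  assumes "orthochronous A" "cmod \<xi> \<le> 1"
    and "Y (act (matrix_inv A) \<xi>) = c *\<^sub>R Z (act (matrix_inv A) \<xi>)"
  shows "push A Y \<xi> = c *\<^sub>R push A Z \<xi>"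
proof -
  have "linear (\<lambda>h. dProj (A *v lift (act (matrix_inv A) \<xi>)) (A *v dlift h))"
    unfolding dlift_def
    by (intro linear_compose[OF _ linear_dProj, unfolded o_def] linear_compose
        [OF _ matrix_vector_mul_linear, unfolded o_def]) (rule linearI; simp add: vec_eq_iff forall_3)
  then show ?thesis
    unfolding push_eq_dProj[OF assms(1,2)] assms(3) by (rule linear_scale)
qed

lemma push_Lam:
  assumes "orthochronous A" "det A = 1" "cmod \<xi> \<le> 1"
  shows "push A (Lam \<sigma>) \<xi> = Lam (A *v \<sigma>) \<xi>"
proof -
  have O: "A \<in> O12" using assms(1) by (simp add: orthochronous_def)
  define y where "y = lift (act (matrix_inv A) \<xi>)"
  define u where "u = mcross y \<sigma>"
  define t where "t = (A *v y)$1"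
  have z1: "cmod (act (matrix_inv A) \<xi>) \<le> 1"
    by (rule act_cball[OF orthochronous_matrix_inv[OF assms(1)] assms(3)])
  have t: "0 < t" unfolding t_def y_def by (rule act_first_coord_pos[OF assms(1) z1])
  have Ay: "A *v y = t *\<^sub>R lift \<xi>"
    using lift_act[OF assms(1) z1] t act_matrix_inv_act(2)[OF assms(1,3)]
    by (simp add: t_def y_def)
  have "push A (Lam \<sigma>) \<xi> = dProj (A *v y) (A *v dlift (dProj y u))"
    by (simp add: push_eq_dProj[OF assms(1,3)] Lam_eq_dProj y_def u_def)
  also have "\<dots> = dProj (A *v y) (A *v u - u$1 *\<^sub>R (A *v y))"
    by (simp add: dlift_dProj y_def matrix_vector_mult_diff_distrib matrix_vector_mult_scaleR)
  also have "\<dots> = dProj (A *v y) (A *v u)"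
    using t dProj_self[of "A *v y"]
    by (simp add: t_def linear_diff[OF linear_dProj] linear_scale[OF linear_dProj])
  also have "\<dots> = dProj (A *v y) (mcross (A *v y) (A *v \<sigma>))"
    by (simp add: u_def O12_mcross[OF O assms(2)])
  also have "\<dots> = Lam (A *v \<sigma>) \<xi>"
    using t by (simp add: Ay Lam_eq_dProj mcross_scaleR_left dProj_scaleR)
  finally show ?thesis .
qed

lemma vf_S1_eq_phi:
  assumes "vf_S1 X" "z \<in> sphere 0 1"
  shows "X z = phi X z *\<^sub>R (\<i> * z)"
proof -
  have "X z / (\<i> * z) \<in> \<real>" using assms by (simp add: vf_S1_def)
  then have "X z / (\<i> * z) = of_real (phi X z)"
    by (simp add: phi_def complex_is_Real_iff complex_eq_iff)
  moreover have "z \<noteq> 0" using assms(2) by auto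
  ultimately show ?thesis by (simp add: scaleR_conv_of_real field_simps)
qed

lemma phi_push:
  assumes "orthochronous A" "det A = 1" "vf_S1 X" "\<xi> \<in> sphere 0 1"
  shows "phi (push A X) \<xi> = push_factor A \<xi> * phi X (act (matrix_inv A) \<xi>)"
proof -
  let ?\<zeta> = "act (matrix_inv A) \<xi>"
  have \<zeta>: "?\<zeta> \<in> sphere 0 1" by (rule act_sphere[OF orthochronous_matrix_inv[OF assms(1)] assms(4)])
  have \<xi>: "cmod \<xi> \<le> 1" "\<xi> \<noteq> 0" using assms(4) by auto
  have rotation: "\<i> * ?\<zeta> = Lam (- axis 1 1) ?\<zeta>"
    using \<zeta> by (simp add: Lam_on_circle lor_bilinear lor_axis1)
  have "push A X \<xi> = phi X ?\<zeta> *\<^sub>R push A (Lam (- axis 1 1)) \<xi>"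
    by (rule push_scaleR[OF assms(1) \<xi>(1)]) (simp add: vf_S1_eq_phi[OF assms(3) \<zeta>] rotation)
  also have "\<dots> = phi X ?\<zeta> *\<^sub>R (\<i> * \<xi> * push_factor A \<xi>)"
    using assms(1,4)
    by (simp add: push_Lam[OF assms(1,2) \<xi>(1)] Lam_on_circle push_factor_eq_lor orthochronous_def)
  finally show ?thesis using \<xi>(2) by (simp add: phi_def scaleR_conv_of_real)
qed

lemma phi_add_Lam:
  assumes "\<xi> \<in> sphere 0 1"
  shows "phi (\<lambda>z. Y z + Lam v z) \<xi> = phi Y \<xi> + lor (lift \<xi>) v"
proof -
  have "\<xi> \<noteq> 0" using assms by auto
  then show ?thesis using assms by (simp add: phi_def Lam_on_circle add_divide_distrib)
qed

section \<open>Affine envelopes\<close>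

definition env_bound :: "bool \<Rightarrow> 'a::ord \<Rightarrow> 'a \<Rightarrow> bool" where
  "env_bound s x y \<longleftrightarrow> (if s then y \<le> x else x \<le> y)"

definition env_extremum :: "bool \<Rightarrow> 'a::complete_lattice set \<Rightarrow> 'a" where
  "env_extremum s V = (if s then Inf V else Sup V)"

definition bounding_vectors :: "bool \<Rightarrow> (complex \<Rightarrow> complex) \<Rightarrow> (real^3) set" where
  "bounding_vectors s X = {w. \<forall>z\<in>sphere 0 1. env_bound s (lor (lift z) w) (phi X z)}"

lemma env_bound_order_embedding:
  assumes "\<And>x y. f x \<le> f y \<longleftrightarrow> x \<le> y"
  shows "env_bound s (f x) (f y) \<longleftrightarrow> env_bound s x y"
  by (simp add: env_bound_def assms)

lemma env_extremum_order_iso: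
  fixes f :: "'a::complete_lattice \<Rightarrow> 'b::complete_lattice"
  assumes mono: "\<And>x y. f x \<le> f y \<longleftrightarrow> x \<le> y" and "surj f"
  shows "env_extremum s (f ` V) = f (env_extremum s V)"
proof -
  obtain g where g: "\<And>y. f (g y) = y" using \<open>surj f\<close> by (metis surjD)
  have "Sup (f ` V) = f (Sup V)"
  proof (rule antisym)
    show "Sup (f ` V) \<le> f (Sup V)" by (rule Sup_least) (auto simp: mono Sup_upper)
    have "Sup V \<le> g (Sup (f ` V))" by (rule Sup_least) (metis g mono Sup_upper imageI)
    then show "f (Sup V) \<le> Sup (f ` V)" by (metis g mono)
  qed
  moreover have "Inf (f ` V) = f (Inf V)"
  proof (rule antisym)
    show "f (Inf V) \<le> Inf (f ` V)" by (rule Inf_greatest) (auto simp: mono Inf_lower)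
    have "g (Inf (f ` V)) \<le> Inf V" by (rule Inf_greatest) (metis g mono Inf_lower imageI)
    then show "Inf (f ` V) \<le> f (Inf V)" by (metis g mono)
  qed
  ultimately show ?thesis by (simp add: env_extremum_def)
qed

lemma env_extremum_eqI:
  fixes c :: "'a::complete_lattice"
  assumes "c \<in> V" "\<And>e. e \<in> V \<Longrightarrow> env_bound s e c"
  shows "env_extremum s V = c"
  using assms by (auto simp: env_extremum_def env_bound_def intro!: antisym Inf_lower Inf_greatest
      Sup_upper Sup_least)

lemma env_bound_affine:
  fixes x y :: real
  shows "0 < c \<Longrightarrow> env_bound s (c * x + d) (c * y + d) \<longleftrightarrow> env_bound s x y"
  by (rule env_bound_order_embedding) simp

lemma ereal_affine_le_iff:
  "0 < c \<Longrightarrow> ereal c * x + ereal d \<le> ereal c * y + ereal d \<longleftrightarrow> x \<le> y"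
  by (cases x; cases y) auto

lemma ereal_affine_eq_iff:
  "0 < c \<Longrightarrow> ereal c * x + ereal d = ereal c * y + ereal d \<longleftrightarrow> x = y"
  by (metis ereal_affine_le_iff order_antisym order_refl)

lemma env_bound_ereal_affine:
  "0 < c \<Longrightarrow> env_bound s (ereal c * x + ereal d) (ereal c * y + ereal d) \<longleftrightarrow> env_bound s x y"
  by (rule env_bound_order_embedding) (rule ereal_affine_le_iff)

lemma env_extremum_ereal_affine:
  assumes "0 < c"
  shows "env_extremum s ((\<lambda>x. ereal c * x + ereal d) ` V) = ereal c * env_extremum s V + ereal d"
proof (rule env_extremum_order_iso)
  show "ereal c * x + ereal d \<le> ereal c * y + ereal d \<longleftrightarrow> x \<le> y" for x y
    by (rule ereal_affine_le_iff[OF assms])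
  show "surj (\<lambda>x. ereal c * x + ereal d)"
  proof (rule surjI)
    show "ereal c * (if \<bar>y\<bar> = \<infinity> then y else ereal ((real_of_ereal y - d) / c)) + ereal d = y"
      for y using assms by (cases y) auto
  qed
qed

lemma env_bound_zero_antisym: "env_bound s x 0 \<Longrightarrow> env_bound s (- x) 0 \<Longrightarrow> (x::real) = 0"
  by (cases s) (auto simp: env_bound_def)

lemma env_bound_zero_conic:
  fixes x y :: real
  assumes "0 \<le> a" "0 \<le> b" "env_bound s x 0" "env_bound s y 0"
  shows "env_bound s (a * x + b * y) 0"
proof (cases s)
  case True
  then have "0 \<le> a * x" "0 \<le> b * y" using assms by (simp_all add: env_bound_def)
  then show ?thesis using True by (simp add: env_bound_def)
next
  case False
  then have "a * x \<le> 0" "b * y \<le> 0" using assms by (simp_all add: env_bound_def mult_nonneg_nonpos)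
  then show ?thesis using False by (simp add: env_bound_def)
qed

lemma affine_fun_iff_lor: "affine_fun a \<longleftrightarrow> (\<exists>w. a = (\<lambda>\<xi>. lor (lift \<xi>) w))"
proof
  assume "affine_fun a"
  then obtain c0 c1 c2 where "\<And>\<xi>. a \<xi> = c0 + c1 * Re \<xi> + c2 * Im \<xi>"
    by (auto simp: affine_fun_def)
  then have "a = (\<lambda>\<xi>. lor (lift \<xi>) (vector [- c0, c1, c2]))" by (simp add: lor_def fun_eq_iff)
  then show "\<exists>w. a = (\<lambda>\<xi>. lor (lift \<xi>) w)" ..
next
  assume "\<exists>w. a = (\<lambda>\<xi>. lor (lift \<xi>) w)"
  then obtain w where "a = (\<lambda>\<xi>. lor (lift \<xi>) w)" ..
  then have "\<forall>\<xi>. a \<xi> = - w$1 + w$2 * Re \<xi> + w$3 * Im \<xi>" by (simp add: lor_def)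
  then show "affine_fun a" unfolding affine_fun_def by blast
qed

lemma phi_env_eq:
  "phi_env s X \<eta> = env_extremum s ((\<lambda>w. ereal (lor (lift \<eta>) w)) ` bounding_vectors s X)"
proof -
  have "{ereal (a \<eta>) | a. affine_fun a \<and> (\<forall>z\<in>sphere 0 1. env_bound s (a z) (phi X z))}
      = (\<lambda>w. ereal (lor (lift \<eta>) w)) ` bounding_vectors s X"
    unfolding affine_fun_iff_lor bounding_vectors_def by auto
  then show ?thesis
    by (cases s) (simp_all add: phi_env_def env_extremum_def env_bound_def)
qed

lemma Sig_eq:
  "Sig s X \<eta> = {\<sigma>. (\<forall>\<xi>\<in>ball 0 1. env_bound s (ereal (lor (lift \<xi>) \<sigma>)) (phi_env s X \<xi>))
      \<and> ereal (lor (lift \<eta>) \<sigma>) = phi_env s X \<eta>}"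
  by (simp add: Sig_def env_bound_def)

lemma sig_closed_segment:
  assumes "Sig s X \<eta> = closed_segment a b"
  shows "sig s X \<eta> = midpoint a b"
  unfolding sig_def
proof (rule someI2)
  show "\<exists>c d. Sig s X \<eta> = closed_segment c d \<and> midpoint a b = midpoint c d" using assms by blast
  fix m assume "\<exists>c d. Sig s X \<eta> = closed_segment c d \<and> m = midpoint c d"
  then obtain c d where "{a, b} = {c, d}" "m = midpoint c d" using assms by auto
  then show "m = midpoint a b" by (auto simp: doubleton_eq_iff midpoint_sym)
qed

lemma closed_segment_affine_image:
  "linear f \<Longrightarrow> (\<lambda>w. f w + v) ` closed_segment a b = closed_segment (f a + v) (f b + v)"
  using closed_segment_translation[of v "f a" "f b"]
  by (simp add: closed_segment_linear_image image_image add.commute)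

lemma midpoint_affine_image:
  assumes "linear f"
  shows "midpoint (f a + v) (f b + v) = f (midpoint a b) + v"
proof -
  have "f a + v + (f b + v) = (midpoint (f a) (f b) + v) + (midpoint (f a) (f b) + v)"
    using midpoint_plus_self[of "f a" "f b"] by (simp add: algebra_simps)
  then show ?thesis by (simp add: midpoint_eq_iff midpoint_linear_image[OF assms])
qed

lemma ball_image_invariant:
  assumes "f ` S = S"
  shows "(\<forall>z\<in>S. P (f z)) \<longleftrightarrow> (\<forall>z\<in>S. P z)"
  by (metis assms imageE imageI)

section \<open>Transport of the envelopes\<close>

locale phi_transport =
  fixes A :: "real^3^3" and X Y :: "complex \<Rightarrow> complex" and v :: "real^3"
  assumes orthochronous: "orthochronous A"
    and phi_eq: "\<And>z. z \<in> sphere 0 1 \<Longrightarrow>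
      phi Y z = push_factor A z * phi X (act (matrix_inv A) z) + lor (lift z) v"
begin

lemma lor_transport:
  "cmod \<xi> \<le> 1 \<Longrightarrow> lor (lift \<xi>) (A *v w + v)
    = push_factor A \<xi> * lor (lift (act (matrix_inv A) \<xi>)) w + lor (lift \<xi>) v"
  by (simp add: lor_bilinear push_factor_lor[OF orthochronous])

lemma surj_affine: "surj (\<lambda>w. A *v w + v)"
proof (rule surjI)
  show "A *v (matrix_inv A *v (y - v)) + v = y" for y
    by (simp add: orthochronous_matrix_inv_vector[OF orthochronous])
qed

lemma bounding_vectors_transport:
  "bounding_vectors s Y = (\<lambda>w. A *v w + v) ` bounding_vectors s X"
proof -
  have "(\<lambda>w. A *v w + v) -` bounding_vectors s Y = bounding_vectors s X"
  proof -
    have "env_bound s (lor (lift z) (A *v w + v)) (phi Y z)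
        \<longleftrightarrow> env_bound s (lor (lift (act (matrix_inv A) z)) w) (phi X (act (matrix_inv A) z))"
      if "z \<in> sphere 0 1" for z w
      using that push_factor_pos[OF orthochronous, of z]
      by (simp add: lor_transport phi_eq env_bound_affine)
    then show ?thesis
      using ball_image_invariant[OF act_image_sphere[OF orthochronous_matrix_inv[OF orthochronous]],
          of "\<lambda>z. env_bound s (lor (lift z) _) (phi X z)"]
      by (simp add: bounding_vectors_def set_eq_iff)
  qed
  then show ?thesis using surj_affine by (metis surj_image_vimage_eq)
qed

lemma ereal_lor_transport:
  "cmod \<xi> \<le> 1 \<Longrightarrow> ereal (lor (lift \<xi>) (A *v w + v))
    = ereal (push_factor A \<xi>) * ereal (lor (lift (act (matrix_inv A) \<xi>)) w) + ereal (lor (lift \<xi>) v)"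
  by (simp add: lor_transport)

lemma phi_env_transport:
  assumes "cmod \<xi> \<le> 1"
  shows "phi_env s Y \<xi>
    = ereal (push_factor A \<xi>) * phi_env s X (act (matrix_inv A) \<xi>) + ereal (lor (lift \<xi>) v)"
proof -
  have c: "0 < push_factor A \<xi>" by (rule push_factor_pos[OF orthochronous assms])
  have "(\<lambda>w. ereal (lor (lift \<xi>) w)) ` bounding_vectors s Y
      = (\<lambda>x. ereal (push_factor A \<xi>) * x + ereal (lor (lift \<xi>) v))
          ` (\<lambda>w. ereal (lor (lift (act (matrix_inv A) \<xi>)) w)) ` bounding_vectors s X"
    by (simp add: bounding_vectors_transport image_image ereal_lor_transport[OF assms])
  then show ?thesis by (simp add: phi_env_eq env_extremum_ereal_affine[OF c])
qed

lemma Sig_transport: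
  assumes "\<eta> \<in> ball 0 1"
  shows "Sig s Y \<eta> = (\<lambda>w. A *v w + v) ` Sig s X (act (matrix_inv A) \<eta>)"
proof -
  have transport: "env_bound s (ereal (lor (lift \<xi>) (A *v \<sigma> + v))) (phi_env s Y \<xi>)
      \<longleftrightarrow> env_bound s (ereal (lor (lift (act (matrix_inv A) \<xi>)) \<sigma>))
            (phi_env s X (act (matrix_inv A) \<xi>))"
    "ereal (lor (lift \<xi>) (A *v \<sigma> + v)) = phi_env s Y \<xi>
      \<longleftrightarrow> ereal (lor (lift (act (matrix_inv A) \<xi>)) \<sigma>) = phi_env s X (act (matrix_inv A) \<xi>)"
    if "cmod \<xi> \<le> 1" for \<xi> \<sigma>
    using env_bound_ereal_affine[OF push_factor_pos[OF orthochronous that]]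
      ereal_affine_eq_iff[OF push_factor_pos[OF orthochronous that]]
    by (simp_all only: ereal_lor_transport[OF that] phi_env_transport[OF that])
  have "(\<lambda>w. A *v w + v) -` Sig s Y \<eta> = Sig s X (act (matrix_inv A) \<eta>)"
    using assms ball_image_invariant[OF act_image_ball[OF orthochronous_matrix_inv[OF orthochronous]],
        of "\<lambda>\<xi>. env_bound s (ereal (lor (lift \<xi>) _)) (phi_env s X \<xi>)"]
    by (simp add: Sig_eq transport set_eq_iff)
  then show ?thesis using surj_affine by (metis surj_image_vimage_eq)
qed

lemma Sig_transport_closed_segment:
  assumes "E_defined s X" "\<eta> \<in> ball 0 1"
  obtains a b where "Sig s X (act (matrix_inv A) \<eta>) = closed_segment a b"
    "Sig s Y \<eta> = closed_segment (A *v a + v) (A *v b + v)"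
proof -
  have "act (matrix_inv A) \<eta> \<in> ball 0 1"
    by (rule act_ball[OF orthochronous_matrix_inv[OF orthochronous] assms(2)])
  then obtain a b where "Sig s X (act (matrix_inv A) \<eta>) = closed_segment a b"
    using assms(1) unfolding E_defined_def by blast
  then show ?thesis
    using that Sig_transport[OF assms(2)] closed_segment_affine_image[OF matrix_vector_mul_linear]
    by metis
qed

lemma E_defined_transport: "E_defined s X \<Longrightarrow> E_defined s Y"
  unfolding E_defined_def[of s Y] by (metis Sig_transport_closed_segment)

lemma sig_transport:
  assumes "E_defined s X" "\<eta> \<in> ball 0 1"
  shows "sig s Y \<eta> = A *v sig s X (act (matrix_inv A) \<eta>) + v"
proof -
  obtain a b where "Sig s X (act (matrix_inv A) \<eta>) = closed_segment a b"
    "Sig s Y \<eta> = closed_segment (A *v a + v) (A *v b + v)"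
    using Sig_transport_closed_segment[OF assms] .
  then show ?thesis
    by (simp add: sig_closed_segment midpoint_affine_image[OF matrix_vector_mul_linear])
qed

end

section \<open>The envelopes of a Killing field\<close>

lemma affine_env_bound_closed_disc:
  assumes "\<forall>z\<in>sphere 0 1. env_bound s (lor (lift z) w) 0" "cmod \<xi> \<le> 1"
  shows "env_bound s (lor (lift \<xi>) w) 0"
proof -
  define r where "r = cmod \<xi>"
  define u where "u = (if \<xi> = 0 then 1 else \<xi> / of_real r)"
  have u: "u \<in> sphere 0 1" "- u \<in> sphere 0 1" by (auto simp: u_def r_def norm_divide)
  have r: "0 \<le> (1 + r) / 2" "0 \<le> (1 - r) / 2" using assms(2) by (auto simp: r_def)
  have "\<xi> = of_real r * u" by (auto simp: u_def r_def)
  then have "lor (lift \<xi>) w = (1 + r) / 2 * lor (lift u) w + (1 - r) / 2 * lor (lift (- u)) w"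
    by (simp add: lor_def field_simps)
  moreover have "env_bound s (lor (lift u) w) 0" "env_bound s (lor (lift (- u)) w) 0"
    using assms(1) u by auto
  ultimately show ?thesis using env_bound_zero_conic[OF r] by simp
qed

lemma affine_env_bound_vanishing:
  assumes "\<eta> \<in> ball 0 1" "\<forall>\<xi>\<in>ball 0 1. env_bound s (lor (lift \<xi>) \<sigma>) 0" "lor (lift \<eta>) \<sigma> = 0"
  shows "\<sigma> = 0"
proof -
  define e where "e = (1 - cmod \<eta>) / 2"
  have e: "0 < e" using assms(1) by (simp add: e_def)
  have slope: "Re d * \<sigma>$2 + Im d * \<sigma>$3 = 0" if "cmod d = e" for d
  proof (rule env_bound_zero_antisym)
    have "cmod d < 1 - cmod \<eta>" using that e by (simp add: e_def)
    then have "\<eta> + d \<in> ball 0 1" "\<eta> - d \<in> ball 0 1"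
      using norm_triangle_ineq[of \<eta> d] norm_triangle_ineq4[of \<eta> d] by simp_all
    moreover have "lor (lift (\<eta> + d)) \<sigma> = Re d * \<sigma>$2 + Im d * \<sigma>$3"
      "lor (lift (\<eta> - d)) \<sigma> = - (Re d * \<sigma>$2 + Im d * \<sigma>$3)"
      using assms(3) by (simp_all add: lor_def algebra_simps)
    ultimately show "env_bound s (Re d * \<sigma>$2 + Im d * \<sigma>$3) 0"
      "env_bound s (- (Re d * \<sigma>$2 + Im d * \<sigma>$3)) 0"
      using assms(2) by metis+
  qed
  have "\<sigma>$2 = 0" "\<sigma>$3 = 0"
    using slope[of "of_real e"] slope[of "\<i> * of_real e"] e by (simp_all add: norm_mult)
  moreover have "\<sigma>$1 = 0" using assms(3) calculation by (simp add: lor_def)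
  ultimately show ?thesis by (simp add: vec_eq_iff forall_3)
qed

lemma phi_env_zero:
  assumes "cmod \<xi> \<le> 1"
  shows "phi_env s (\<lambda>_. 0) \<xi> = 0"
  unfolding phi_env_eq
proof (rule env_extremum_eqI)
  show "0 \<in> (\<lambda>w. ereal (lor (lift \<xi>) w)) ` bounding_vectors s (\<lambda>_. 0)"
    by (rule image_eqI[of _ _ 0]) (simp_all add: bounding_vectors_def env_bound_def phi_def lor_def
        zero_ereal_def)
  fix e assume "e \<in> (\<lambda>w. ereal (lor (lift \<xi>) w)) ` bounding_vectors s (\<lambda>_. 0)"
  then obtain w where "e = ereal (lor (lift \<xi>) w)"
    "\<forall>z\<in>sphere 0 1. env_bound s (lor (lift z) w) 0"
    by (auto simp: bounding_vectors_def phi_def)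
  then show "env_bound s e 0"
    using affine_env_bound_closed_disc[OF _ assms]
    by (simp add: zero_ereal_def env_bound_order_embedding)
qed

lemma Sig_zero:
  assumes "\<eta> \<in> ball 0 1"
  shows "Sig s (\<lambda>_. 0) \<eta> = {0}"
proof -
  have "\<sigma> \<in> Sig s (\<lambda>_. 0) \<eta>
      \<longleftrightarrow> (\<forall>\<xi>\<in>ball 0 1. env_bound s (lor (lift \<xi>) \<sigma>) 0) \<and> lor (lift \<eta>) \<sigma> = 0" for \<sigma>
    using assms by (simp add: Sig_eq phi_env_zero zero_ereal_def env_bound_order_embedding)
  then show ?thesis
    using affine_env_bound_vanishing[OF assms]
    by (auto simp: env_bound_def lor_def)
qed

lemma Sig_Lam:
  assumes "\<eta> \<in> ball 0 1"
  shows "Sig s (Lam v) \<eta> = {v}"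
proof -
  interpret phi_transport "mat 1" "\<lambda>_. 0" "Lam v" v
  proof
    show "phi (Lam v) z = push_factor (mat 1) z * phi (\<lambda>_. 0) (act (matrix_inv (mat 1)) z)
        + lor (lift z) v" if "z \<in> sphere 0 1" for z
      using phi_add_Lam[OF that, of "\<lambda>_. 0" v] by (simp add: phi_def)
  qed (rule orthochronous_mat1)
  have "act (matrix_inv (mat 1)) \<eta> \<in> ball 0 1"
    by (rule act_ball[OF orthochronous_matrix_inv[OF orthochronous_mat1] assms])
  then show ?thesis by (simp add: Sig_transport[OF assms] Sig_zero)
qed

lemma E_defined_Lam: "E_defined s (Lam v)"
  by (metis E_defined_def Sig_Lam closed_segment_idem)

lemma sig_Lam: "\<eta> \<in> ball 0 1 \<Longrightarrow> sig s (Lam v) \<eta> = v"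
  using sig_closed_segment[of s "Lam v" \<eta> v v] by (simp add: Sig_Lam)

theorem lemma4p7:
  fixes X :: "complex \<Rightarrow> complex" and A :: "real^3^3" and v :: "real^3" and s :: bool
  assumes "vf_S1 X" and "E_defined s X" and "A \<in> O0_12"
  shows "E_defined s (\<lambda>z. push A X z + Lam v z) \<and> E_defined s (Lam v)
    \<and> (\<forall>\<eta>\<in>ball 0 1. E s (\<lambda>z. push A X z + Lam v z) \<eta> = push A (E s X) \<eta> + E s (Lam v) \<eta>)"
proof -
  have A: "orthochronous A" "det A = 1" using O0_12D[OF assms(3)] by (simp_all add: orthochronous_def)
  define Y where "Y = (\<lambda>z. push A X z + Lam v z)"
  interpret phi_transport A X Y v
  proof
    show "phi Y z = push_factor A z * phi X (act (matrix_inv A) z) + lor (lift z) v"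
      if "z \<in> sphere 0 1" for z
      unfolding Y_def phi_add_Lam[OF that] phi_push[OF A assms(1) that] ..
  qed (rule A(1))
  have "E s Y \<eta> = push A (E s X) \<eta> + E s (Lam v) \<eta>" if "\<eta> \<in> ball 0 1" for \<eta>
  proof -
    let ?\<sigma> = "sig s X (act (matrix_inv A) \<eta>)"
    have "push A (E s X) \<eta> = push A (Lam ?\<sigma>) \<eta>" by (simp add: push_def E_eq_Lam)
    also have "\<dots> = Lam (A *v ?\<sigma>) \<eta>" using that by (simp add: push_Lam[OF A])
    finally show ?thesis
      by (simp add: E_eq_Lam sig_transport[OF assms(2) that] sig_Lam[OF that] Lam_add)
  qed
  then show ?thesis
    using E_defined_transport[OF assms(2)] E_defined_Lam unfolding Y_def by blast
qed

end
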